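(* Let $S_1=\mathrm{diag}(1,-1,-1)$, $S_2=\mathrm{diag}(-1,1,-1)$, $S_3=\mathrm{diag}(-1,-1,1)$, and let $G$ be a finite group of $3\times 3$ unitary matrices containing $S_1,S_2,S_3$ and a matrix $T$. Let $c$ be one of the numbers $1/2$, $(\sqrt5+1)/4$, $(\sqrt5-1)/4$. Then: (i) for every $j\in\{1,2,3\}$, if $|T_{jj}|=c$ then $T_{jj}=c\,\xi$ for some root of unity $\xi$; (ii) for all $k\neq l$ in $\{1,2,3\}$, if $|T_{kl}T_{lk}|=\tfrac14$ then $T_{kl}T_{lk}=\xi'/4$ for some root of unity $\xi'$.
   Context: In the paper $T$ is an element of the residual charged-lepton symmetry group $G_\ell$, a subgroup of the finite flavour group $G$, and $G$ contains the Klein four-group $\{\mathbbm 1,S_1,S_2,S_3\}$. *)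

theory Defs
  imports "HOL-Analysis.Analysis"
begin

definition cadj :: "complex^3^3 \<Rightarrow> complex^3^3" where
  "cadj A = (\<chi> i j. cnj (A $ j $ i))"

definition unitary3 :: "complex^3^3 \<Rightarrow> bool" where
  "unitary3 A \<longleftrightarrow> A ** cadj A = mat 1 \<and> cadj A ** A = mat 1"

definition finite_matrix_group :: "(complex^3^3) set \<Rightarrow> bool" where
  "finite_matrix_group G \<longleftrightarrow> finite G \<and> mat 1 \<in> G \<and>
     (\<forall>A\<in>G. \<forall>B\<in>G. A ** B \<in> G) \<and>
     (\<forall>A\<in>G. invertible A \<and> matrix_inv A \<in> G)"

text \<open>S k = diagonal matrix with entry 1 at position k and -1 elsewhere.
  Indices 1,2,3 of the type 3 (where 3 = 0) are the three positions.\<close>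
definition Smat :: "3 \<Rightarrow> complex^3^3" where
  "Smat k = (\<chi> i j. if i = j then (if i = k then 1 else -1) else 0)"

definition root_of_unity :: "complex \<Rightarrow> bool" where
  "root_of_unity z \<longleftrightarrow> (\<exists>n::nat. n > 0 \<and> z ^ n = 1)"

end

theory Submission
  imports Defs "HOL-Computational_Algebra.Fundamental_Theorem_Algebra"
begin

text \<open>Let \<open>N\<close> be an exponent of \<open>G\<close> and \<open>\<zeta>\<close> a primitive \<open>N\<close>-th root of unity. Eigenvalues of
  elements of \<open>G\<close> are powers of \<open>\<zeta>\<close>, so all traces lie in \<open>\<int>[\<zeta>]\<close>. Multiplying \<open>T\<close> by the sign
  matrices \<open>S\<^sub>k\<close> isolates entries: \<open>2T\<^sub>j\<^sub>j\<close> and \<open>4T\<^sub>k\<^sub>lT\<^sub>l\<^sub>k\<close> are sums of traces, hence in \<open>\<int>[\<zeta>]\<close>.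
  For the three admissible values of \<open>c\<close>, \<open>1/(2c)\<close> is an integer polynomial in
  \<open>4c\<^sup>2 = |2T\<^sub>j\<^sub>j|\<^sup>2\<close>, so \<open>T\<^sub>j\<^sub>j/c \<in> \<int>[\<zeta>]\<close> too.

  It remains to show that \<open>y \<in> \<int>[\<zeta>]\<close> with \<open>|y| = 1\<close> is a root of unity (Kronecker). Write
  \<open>y = p(\<zeta>)\<close>. Complex conjugation on \<open>\<int>[\<zeta>]\<close> is \<open>\<zeta> \<mapsto> \<zeta>\<^sup>N\<^sup>-\<^sup>1\<close>, so the integer relation
  \<open>p(\<zeta>) p(\<zeta>\<^sup>N\<^sup>-\<^sup>1) = 1\<close> passes to every root \<open>w\<close> of the minimal polynomial \<open>f\<close> of \<open>\<zeta>\<close>, giving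
  \<open>|p(w)| = 1\<close>. With \<open>g\<close> the cofactor of \<open>f\<close> in \<open>X\<^sup>N - 1\<close>, the integer polynomials \<open>g p\<^sup>m\<close> are
  therefore uniformly bounded at all \<open>N\<close>-th roots of unity; by finite Fourier inversion their
  coefficients reduced mod \<open>X\<^sup>N - 1\<close> are bounded, so \<open>g(\<zeta>) y\<^sup>m\<close> takes finitely many values and
  the powers of \<open>y\<close> repeat.\<close>

abbreviation ipoly :: "int poly \<Rightarrow> complex poly" where
  "ipoly \<equiv> map_poly of_int"

lemma ipoly_add: "ipoly (p + q) = ipoly p + ipoly q"
  by (intro poly_eqI) (simp add: coeff_map_poly)

lemma ipoly_diff: "ipoly (p - q) = ipoly p - ipoly q"
  by (intro poly_eqI) (simp add: coeff_map_poly)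

lemma ipoly_mult: "ipoly (p * q) = ipoly p * ipoly q"
  by (intro poly_eqI) (simp add: coeff_map_poly coeff_mult)

lemma ipoly_power: "ipoly (p ^ n) = ipoly p ^ n"
  by (induction n) (simp_all add: ipoly_mult)

lemma ipoly_pcompose: "ipoly (pcompose p q) = pcompose (ipoly p) (ipoly q)"
  by (induction p) (simp_all add: map_poly_pCons pcompose_pCons ipoly_add ipoly_mult)

lemma cnj_poly_ipoly: "cnj (poly (ipoly p) z) = poly (ipoly p) (cnj z)"
proof -
  have "map_poly cnj (ipoly p) = ipoly p"
    by (intro poly_eqI) (simp add: coeff_map_poly)
  then show ?thesis by (simp add: poly_cnj)
qed

lemma poly_ipoly_smult: "poly (ipoly (smult a p)) z = of_int a * poly (ipoly p) z"
  by (simp add: map_poly_smult)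

definition zeta :: "nat \<Rightarrow> complex" where
  "zeta N = exp (2 * of_real pi * \<i> / of_nat N)"

lemma zeta_nonzero: "zeta N \<noteq> 0"
  by (simp add: zeta_def)

lemma zeta_power: "zeta N ^ j = exp (2 * of_real pi * \<i> * of_nat j / of_nat N)"
  unfolding zeta_def exp_of_nat_mult[symmetric] by (simp add: field_simps)

lemma zeta_power_eq_1_iff: "N \<ge> 1 \<Longrightarrow> zeta N ^ j = 1 \<longleftrightarrow> N dvd j"
  unfolding zeta_power by (rule complex_root_unity_eq_1)

lemma zeta_power_N: "N \<ge> 1 \<Longrightarrow> zeta N ^ N = 1"
  by (simp add: zeta_power_eq_1_iff)

lemma root_of_unity_eq_zeta_power:
  assumes "N \<ge> 1" "z ^ N = 1"
  shows "\<exists>j<N. z = zeta N ^ j"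
  using complex_roots_unity[OF assms(1)] assms(2) by (auto simp: zeta_power)

lemma zeta_power_power_N: "N \<ge> 1 \<Longrightarrow> (zeta N ^ j) ^ N = 1"
  by (simp add: zeta_power_eq_1_iff flip: power_mult)

lemma norm_root_of_unity:
  assumes "N \<ge> 1" "(z::complex) ^ N = 1"
  shows "norm z = 1"
proof -
  have "norm z ^ N = 1 ^ N" using assms by (metis norm_one norm_power power_one)
  then show ?thesis
    using assms(1) by (meson norm_ge_zero power_eq_imp_eq_base zero_le_one less_le_trans zero_less_one)
qed

lemma cnj_root_of_unity:
  assumes "N \<ge> 1" "(z::complex) ^ N = 1"
  shows "cnj z = z ^ (N - 1)"
proof -
  have "z * cnj z = 1"
    using norm_root_of_unity[OF assms] by (metis complex_norm_square mult.commute of_real_1 power_one)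
  moreover have "z * z ^ (N - 1) = 1"
    using assms by (metis One_nat_def Suc_pred' less_eq_Suc_le power_Suc)
  ultimately show ?thesis by (metis mult.commute mult.left_commute mult_1_right)
qed

lemma sum_powers_zeta_power:
  assumes "N \<ge> 1"
  shows "(\<Sum>j<N. (zeta N ^ m) ^ j) = (if N dvd m then of_nat N else 0)"
proof (cases "N dvd m")
  case True
  then have "zeta N ^ m = 1" using assms by (simp add: zeta_power_eq_1_iff)
  with True show ?thesis by simp
next
  case False
  then have "zeta N ^ m \<noteq> 1" using assms by (simp add: zeta_power_eq_1_iff)
  with False show ?thesis by (simp add: geometric_sum zeta_power_power_N[OF assms])
qed

section \<open>The ring \<open>\<int>[\<zeta>]\<close>\<close>

definition cyclotomic_ints :: "nat \<Rightarrow> complex set" where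
  "cyclotomic_ints N = range (\<lambda>p. poly (ipoly p) (zeta N))"

lemma cyclotomic_ints_add:
  assumes "x \<in> cyclotomic_ints N" "y \<in> cyclotomic_ints N"
  shows "x + y \<in> cyclotomic_ints N"
proof -
  obtain p q where "x = poly (ipoly p) (zeta N)" "y = poly (ipoly q) (zeta N)"
    using assms unfolding cyclotomic_ints_def by blast
  then have "x + y = poly (ipoly (p + q)) (zeta N)" by (simp add: ipoly_add)
  then show ?thesis unfolding cyclotomic_ints_def by blast
qed

lemma cyclotomic_ints_mult:
  assumes "x \<in> cyclotomic_ints N" "y \<in> cyclotomic_ints N"
  shows "x * y \<in> cyclotomic_ints N"
proof -
  obtain p q where "x = poly (ipoly p) (zeta N)" "y = poly (ipoly q) (zeta N)"
    using assms unfolding cyclotomic_ints_def by blast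
  then have "x * y = poly (ipoly (p * q)) (zeta N)" by (simp add: ipoly_mult)
  then show ?thesis unfolding cyclotomic_ints_def by blast
qed

lemma of_int_in_cyclotomic_ints: "of_int a \<in> cyclotomic_ints N"
  unfolding cyclotomic_ints_def by (rule range_eqI[of _ _ "[:a:]"]) (simp add: map_poly_pCons)

lemma zeta_power_in_cyclotomic_ints: "zeta N ^ j \<in> cyclotomic_ints N"
  unfolding cyclotomic_ints_def
  by (rule range_eqI[of _ _ "monom 1 j"]) (simp add: map_poly_monom poly_monom)

lemma cnj_in_cyclotomic_ints:
  assumes "N \<ge> 1" "x \<in> cyclotomic_ints N"
  shows "cnj x \<in> cyclotomic_ints N"
proof -
  obtain p where p: "x = poly (ipoly p) (zeta N)" using assms(2) unfolding cyclotomic_ints_def by blast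
  have "cnj x = poly (ipoly (pcompose p (monom 1 (N - 1)))) (zeta N)"
    using cnj_root_of_unity[OF assms(1) zeta_power_N[OF assms(1)]]
    by (simp add: p cnj_poly_ipoly ipoly_pcompose map_poly_monom poly_pcompose poly_monom)
  then show ?thesis unfolding cyclotomic_ints_def by blast
qed

section \<open>Coefficients modulo \<open>X\<^sup>N - 1\<close> and Fourier inversion\<close>

definition folded_coeff :: "nat \<Rightarrow> int poly \<Rightarrow> nat \<Rightarrow> int" where
  "folded_coeff N s k = (\<Sum>i\<in>{i. i \<le> degree s \<and> i mod N = k}. coeff s i)"

lemma poly_ipoly_root_of_unity_eq_folded:
  assumes "N \<ge> 1" "\<omega> ^ N = 1"
  shows "poly (ipoly s) \<omega> = (\<Sum>k<N. of_int (folded_coeff N s k) * \<omega> ^ k)"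
proof -
  have "poly (ipoly s) \<omega> = (\<Sum>i\<le>degree s. of_int (coeff s i) * \<omega> ^ i)"
    by (simp add: poly_altdef degree_map_poly coeff_map_poly)
  also have "\<dots> = (\<Sum>i\<le>degree s. of_int (coeff s i) * \<omega> ^ (i mod N))"
  proof (intro sum.cong refl)
    fix i
    have "\<omega> ^ i = (\<omega> ^ N) ^ (i div N) * \<omega> ^ (i mod N)"
      by (metis div_mult_mod_eq mult.commute power_add power_mult)
    then show "of_int (coeff s i) * \<omega> ^ i = of_int (coeff s i) * \<omega> ^ (i mod N)"
      by (simp add: assms(2))
  qed
  also have "\<dots> = (\<Sum>k<N. \<Sum>i\<in>{x\<in>{..degree s}. x mod N = k}. of_int (coeff s i) * \<omega> ^ (i mod N))"
    by (rule sum.group[symmetric]) (use assms(1) in auto)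
  also have "\<dots> = (\<Sum>k<N. of_int (folded_coeff N s k) * \<omega> ^ k)"
    unfolding folded_coeff_def of_int_sum sum_distrib_right by (intro sum.cong refl) auto
  finally show ?thesis .
qed

lemma power_mult_power_eq: "((z::'a::comm_monoid_mult) ^ j) ^ a * z ^ (j * b) = (z ^ (a + b)) ^ j"
  by (simp add: power_add power_mult_distrib mult.commute flip: power_mult)

lemma dvd_add_complement_iff:
  fixes k k' N :: nat
  assumes "k < N" "k' < N"
  shows "N dvd k' + (N - k) \<longleftrightarrow> k' = k"
proof
  assume "N dvd k' + (N - k)"
  then obtain c where c: "k' + (N - k) = N * c" by (elim dvdE)
  have "0 < N * c" "N * c < N * 2" using assms c by linarith+
  then have "c = 1" by (simp add: mult_less_cancel1)
  then have "k' + (N - k) = N" using c by simp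
  then show "k' = k" using assms by linarith
qed (use assms in simp)

lemma folded_coeff_inversion:
  assumes "N \<ge> 1" "k < N"
  shows "of_nat N * of_int (folded_coeff N s k)
           = (\<Sum>j<N. poly (ipoly s) (zeta N ^ j) * zeta N ^ (j * (N - k)))"
proof -
  let ?a = "\<lambda>k'. of_int (folded_coeff N s k') :: complex"
  have "(\<Sum>j<N. poly (ipoly s) (zeta N ^ j) * zeta N ^ (j * (N - k)))
     = (\<Sum>j<N. \<Sum>k'<N. ?a k' * (zeta N ^ (k' + (N - k))) ^ j)"
    unfolding poly_ipoly_root_of_unity_eq_folded[OF assms(1) zeta_power_power_N[OF assms(1)]] sum_distrib_right
    by (intro sum.cong refl) (simp only: mult.assoc power_mult_power_eq)
  also have "\<dots> = (\<Sum>k'<N. ?a k' * (\<Sum>j<N. (zeta N ^ (k' + (N - k))) ^ j))"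
    by (subst sum.swap) (simp only: sum_distrib_left)
  also have "\<dots> = (\<Sum>k'<N. if k' = k then ?a k * of_nat N else 0)"
    using dvd_add_complement_iff[OF assms(2)]
    by (intro sum.cong refl) (simp add: sum_powers_zeta_power[OF assms(1)])
  also have "\<dots> = of_nat N * ?a k" using assms by simp
  finally show ?thesis by (rule sym)
qed

lemma folded_coeff_bound:
  assumes N: "N \<ge> 1" and k: "k < N"
    and bound: "\<And>j. j < N \<Longrightarrow> norm (poly (ipoly s) (zeta N ^ j)) \<le> B"
  shows "\<bar>of_int (folded_coeff N s k)\<bar> \<le> B"
proof -
  have "of_nat N * \<bar>of_int (folded_coeff N s k)\<bar>
        = norm (\<Sum>j<N. poly (ipoly s) (zeta N ^ j) * zeta N ^ (j * (N - k)))"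
    using arg_cong[OF folded_coeff_inversion[OF N k, of s], of norm] by (simp add: norm_mult)
  also have "\<dots> \<le> (\<Sum>j<N. norm (poly (ipoly s) (zeta N ^ j) * zeta N ^ (j * (N - k))))"
    by (rule norm_sum)
  also have "\<dots> \<le> (\<Sum>j<N. B)"
    using bound norm_root_of_unity[OF N zeta_power_power_N[OF N]]
    by (intro sum_mono) (simp add: norm_mult)
  finally have "of_nat N * \<bar>of_int (folded_coeff N s k)\<bar> \<le> of_nat N * B" by simp
  then show ?thesis using N by simp
qed

text \<open>The coordinates of these values in \<open>1, \<zeta>, \<dots>, \<zeta>\<^sup>N\<^sup>-\<^sup>1\<close> are bounded integers.\<close>

lemma finite_values_bounded_at_roots_of_unity:
  assumes N: "N \<ge> 1"
  shows "finite {poly (ipoly s) (zeta N) | s. \<forall>j<N. norm (poly (ipoly s) (zeta N ^ j)) \<le> B}"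
proof -
  define C where "C = \<lceil>B\<rceil>"
  let ?sum = "\<lambda>c. \<Sum>k<N. of_int (c k) * zeta N ^ k"
  have "{poly (ipoly s) (zeta N) | s. \<forall>j<N. norm (poly (ipoly s) (zeta N ^ j)) \<le> B}
        \<subseteq> ?sum ` PiE {..<N} (\<lambda>_. {-C..C})"
  proof clarify
    fix s assume bound: "\<forall>j<N. norm (poly (ipoly s) (zeta N ^ j)) \<le> B"
    have "\<bar>folded_coeff N s k\<bar> \<le> C" if "k < N" for k
    proof -
      have "\<bar>of_int (folded_coeff N s k)\<bar> \<le> B" using folded_coeff_bound[OF N that] bound by blast
      then show ?thesis unfolding C_def by linarith
    qed
    then have "restrict (folded_coeff N s) {..<N} \<in> PiE {..<N} (\<lambda>_. {-C..C})"
      by (auto simp: abs_le_iff minus_le_iff)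
    moreover have "poly (ipoly s) (zeta N) = ?sum (restrict (folded_coeff N s) {..<N})"
      by (simp add: poly_ipoly_root_of_unity_eq_folded[OF N zeta_power_N[OF N]])
    ultimately show "poly (ipoly s) (zeta N) \<in> ?sum ` PiE {..<N} (\<lambda>_. {-C..C})" by blast
  qed
  moreover have "finite (?sum ` PiE {..<N} (\<lambda>_. {-C..C}))"
    by (intro finite_imageI finite_PiE) auto
  ultimately show ?thesis by (rule finite_subset)
qed

section \<open>Kronecker's theorem in \<open>\<int>[\<zeta>]\<close>\<close>

definition min_ipoly :: "complex \<Rightarrow> int poly \<Rightarrow> bool" where
  "min_ipoly z f \<longleftrightarrow> f \<noteq> 0 \<and> poly (ipoly f) z = 0 \<and>
     (\<forall>g. g \<noteq> 0 \<and> poly (ipoly g) z = 0 \<longrightarrow> degree f \<le> degree g)"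

lemma min_ipoly_zeta_exists:
  assumes N: "N \<ge> 1"
  shows "\<exists>f. min_ipoly (zeta N) f"
proof -
  have "monom 1 N - 1 \<noteq> (0 :: int poly)"
  proof
    assume "monom 1 N - 1 = (0 :: int poly)"
    then have "coeff (monom 1 N - 1 :: int poly) N = 0" by simp
    then show False using N by (simp add: coeff_monom)
  qed
  moreover have "poly (ipoly (monom 1 N - 1)) (zeta N) = 0"
    using zeta_power_N[OF N] by (simp add: ipoly_diff map_poly_monom poly_monom)
  ultimately have "\<exists>f. (f \<noteq> 0 \<and> poly (ipoly f) (zeta N) = 0) \<and>
          (\<forall>g. g \<noteq> 0 \<and> poly (ipoly g) (zeta N) = 0 \<longrightarrow> degree f \<le> degree g)"
    by (intro ex_has_least_nat[of _ "monom 1 N - 1"]) simp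
  then show ?thesis unfolding min_ipoly_def by blast
qed

lemma min_ipoly_dvd:
  assumes f: "min_ipoly z f" and h: "poly (ipoly h) z = 0"
  shows "\<exists>a q. a \<noteq> 0 \<and> smult a h = f * q"
proof -
  have f0: "f \<noteq> 0" using f min_ipoly_def by blast
  define r where "r = pseudo_mod h f"
  obtain a q where aq: "a \<noteq> 0" "smult a h = f * q + r"
    using pseudo_mod(1)[OF f0, of h] r_def by blast
  have deg: "r = 0 \<or> degree r < degree f" using pseudo_mod(2)[OF f0, of h] r_def by simp
  have "ipoly (smult a h) = ipoly f * ipoly q + ipoly r" using aq by (simp add: ipoly_mult ipoly_add)
  then have "poly (ipoly (smult a h)) z = poly (ipoly f) z * poly (ipoly q) z + poly (ipoly r) z"
    by simp
  then have "poly (ipoly r) z = 0" using f h by (simp add: poly_ipoly_smult min_ipoly_def)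
  then have "r = 0" using deg f unfolding min_ipoly_def by (meson not_le)
  then show ?thesis using aq by auto
qed

lemma min_ipoly_root_imp_root:
  assumes f: "min_ipoly z f" and h: "poly (ipoly h) z = 0" and w: "poly (ipoly f) w = 0"
  shows "poly (ipoly h) w = 0"
proof -
  obtain a q where "a \<noteq> 0" "smult a h = f * q" using min_ipoly_dvd[OF f h] by blast
  then have "poly (ipoly (smult a h)) w = poly (ipoly f * ipoly q) w" by (simp add: ipoly_mult)
  then have "of_int a * poly (ipoly h) w = poly (ipoly f) w * poly (ipoly q) w"
    by (simp add: poly_ipoly_smult)
  with \<open>a \<noteq> 0\<close> w show ?thesis by simp
qed

lemma norm_poly_at_conjugate_eq_1:
  assumes N: "N \<ge> 1" and f: "min_ipoly (zeta N) f"
    and y: "norm (poly (ipoly p) (zeta N)) = 1"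
    and w: "w ^ N = 1" "poly (ipoly f) w = 0"
  shows "norm (poly (ipoly p) w) = 1"
proof -
  define h where "h = p * pcompose p (monom 1 (N - 1)) - 1"
  have poly_h: "poly (ipoly h) u = poly (ipoly p) u * cnj (poly (ipoly p) u) - 1" if "u ^ N = 1" for u
    using cnj_root_of_unity[OF N that]
    by (simp add: h_def ipoly_diff ipoly_mult ipoly_pcompose map_poly_monom poly_pcompose poly_monom
        cnj_poly_ipoly)
  have "poly (ipoly h) (zeta N) = 0"
    using y complex_norm_square[of "poly (ipoly p) (zeta N)"] by (simp add: poly_h[OF zeta_power_N[OF N]])
  then have "poly (ipoly h) w = 0" by (rule min_ipoly_root_imp_root[OF f _ w(2)])
  then have "complex_of_real (norm (poly (ipoly p) w) ^ 2) = 1"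
    using complex_norm_square[of "poly (ipoly p) w"] by (simp add: poly_h[OF w(1)])
  then have "norm (poly (ipoly p) w) ^ 2 = 1" using of_real_eq_1_iff by blast
  then show ?thesis using norm_ge_zero[of "poly (ipoly p) w"] by (auto simp: power2_eq_1_iff)
qed

text \<open>\<open>g\<close> is the cofactor of \<open>f\<close> in \<open>a(X\<^sup>N - 1)\<close>; it does not vanish at \<open>\<zeta>\<close> because \<open>X\<^sup>N - 1\<close> is separable.\<close>

lemma min_ipoly_cofactor:
  assumes N: "N \<ge> 1" and f: "min_ipoly (zeta N) f"
  obtains g where "poly (ipoly g) (zeta N) \<noteq> 0"
    and "\<And>w. w ^ N = 1 \<Longrightarrow> poly (ipoly f) w \<noteq> 0 \<Longrightarrow> poly (ipoly g) w = 0"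
proof -
  define X where "X = (monom 1 N - 1 :: int poly)"
  have ipoly_X: "ipoly X = monom 1 N - 1" by (simp add: X_def ipoly_diff map_poly_monom)
  have "poly (ipoly X) (zeta N) = 0" using zeta_power_N[OF N] by (simp add: ipoly_X poly_monom)
  then obtain a g where a: "a \<noteq> 0" and fg: "smult a X = f * g" using min_ipoly_dvd[OF f] by blast
  have factor: "smult (of_int a) (monom 1 N - 1) = ipoly f * ipoly g"
    using arg_cong[OF fg, of ipoly] by (simp add: map_poly_smult ipoly_X ipoly_mult)
  have "poly (ipoly g) (zeta N) \<noteq> 0"
  proof
    assume g0: "poly (ipoly g) (zeta N) = 0"
    have "pderiv (smult (of_int a) (monom 1 N - 1)) = pderiv (ipoly f * ipoly g)"
      using factor by simp
    then have "smult (of_int a) (monom (of_nat N) (N - 1))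
               = ipoly f * pderiv (ipoly g) + ipoly g * pderiv (ipoly f)"
      by (simp add: pderiv_smult pderiv_diff pderiv_monom pderiv_mult)
    from arg_cong[OF this, of "\<lambda>q. poly q (zeta N)"]
    have "of_int a * (of_nat N * zeta N ^ (N - 1))
          = poly (ipoly f) (zeta N) * poly (pderiv (ipoly g)) (zeta N)
            + poly (ipoly g) (zeta N) * poly (pderiv (ipoly f)) (zeta N)"
      by (simp add: poly_monom)
    also have "\<dots> = 0" using f g0 by (simp add: min_ipoly_def)
    finally show False using a N zeta_nonzero by simp
  qed
  moreover have "poly (ipoly g) w = 0" if "w ^ N = 1" "poly (ipoly f) w \<noteq> 0" for w
  proof -
    have "of_int a * (w ^ N - 1) = poly (ipoly f) w * poly (ipoly g) w"
      using arg_cong[OF factor, of "\<lambda>q. poly q w"] by (simp add: poly_monom)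
    then show ?thesis using that by simp
  qed
  ultimately show ?thesis by (rule that)
qed

lemma finite_range_nat_period:
  fixes g :: "nat \<Rightarrow> 'a"
  assumes "finite (range g)" and cancel: "\<And>a d. g (a + d) = g a \<Longrightarrow> g d = e"
  shows "\<exists>n>0. g n = e"
proof -
  have "\<not> inj g"
  proof
    assume "inj g"
    with assms(1) have "finite (UNIV :: nat set)" by (rule finite_imageD)
    then show False by simp
  qed
  then obtain a b where ab: "a \<noteq> b" "g a = g b" unfolding inj_def by blast
  define m n where "m = min a b" and "n = max a b"
  have "m < n" "g m = g n" using ab unfolding m_def n_def by (cases "a < b"; auto)+
  then have "g (m + (n - m)) = g m" by simp
  then have "g (n - m) = e" by (rule cancel)
  with \<open>m < n\<close> show ?thesis by (intro exI[of _ "n - m"]) simp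
qed

theorem cyclotomic_int_norm_1_imp_root_of_unity:
  assumes N: "N \<ge> 1" and y: "y \<in> cyclotomic_ints N" "norm y = 1"
  shows "root_of_unity y"
proof -
  obtain p where p: "y = poly (ipoly p) (zeta N)" using y(1) unfolding cyclotomic_ints_def by blast
  obtain f where f: "min_ipoly (zeta N) f" using min_ipoly_zeta_exists[OF N] by blast
  then obtain g where g: "poly (ipoly g) (zeta N) \<noteq> 0"
    and g_vanishes: "\<And>w. w ^ N = 1 \<Longrightarrow> poly (ipoly f) w \<noteq> 0 \<Longrightarrow> poly (ipoly g) w = 0"
    using min_ipoly_cofactor[OF N] by blast
  define B where "B = (\<Sum>j<N. norm (poly (ipoly g) (zeta N ^ j)))"
  have bound: "norm (poly (ipoly (g * p ^ m)) (zeta N ^ j)) \<le> B" if "j < N" for m j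
    \<comment> \<open>at roots of \<open>f\<close> we have \<open>|p| = 1\<close>; at the other roots of unity \<open>g\<close> vanishes\<close>
  proof -
    have "norm (poly (ipoly g) (zeta N ^ j)) \<le> B"
      unfolding B_def by (rule member_le_sum) (use that in auto)
    moreover have "0 \<le> B" unfolding B_def by (simp add: sum_nonneg)
    ultimately show ?thesis
      using norm_poly_at_conjugate_eq_1[OF N f y(2)[unfolded p] zeta_power_power_N[OF N]]
        g_vanishes[OF zeta_power_power_N[OF N]]
      by (cases "poly (ipoly f) (zeta N ^ j) = 0") (auto simp: ipoly_mult ipoly_power norm_mult norm_power)
  qed
  have "poly (ipoly g) (zeta N) * y ^ m \<in>
          {poly (ipoly s) (zeta N) | s. \<forall>j<N. norm (poly (ipoly s) (zeta N ^ j)) \<le> B}" for m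
  proof (intro CollectI exI conjI allI impI)
    show "poly (ipoly g) (zeta N) * y ^ m = poly (ipoly (g * p ^ m)) (zeta N)"
      by (simp add: p ipoly_mult ipoly_power)
  qed (rule bound)
  then have "range (\<lambda>m. poly (ipoly g) (zeta N) * y ^ m)
             \<subseteq> {poly (ipoly s) (zeta N) | s. \<forall>j<N. norm (poly (ipoly s) (zeta N ^ j)) \<le> B}"
    by blast
  then have "finite (range (\<lambda>m. poly (ipoly g) (zeta N) * y ^ m))"
    by (rule finite_subset) (rule finite_values_bounded_at_roots_of_unity[OF N])
  moreover have "range (power y)
                 \<subseteq> (\<lambda>x. x / poly (ipoly g) (zeta N)) ` range (\<lambda>m. poly (ipoly g) (zeta N) * y ^ m)"
    using g by (auto simp: image_image)
  ultimately have "finite (range (power y))" by (meson finite_imageI finite_subset)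
  moreover have "y \<noteq> 0" using y(2) by auto
  ultimately have "\<exists>n>0. y ^ n = 1"
    by (intro finite_range_nat_period) (auto simp: power_add)
  then show ?thesis unfolding root_of_unity_def by blast
qed

section \<open>Traces of elements of finite matrix groups\<close>

primrec matpow :: "complex^3^3 \<Rightarrow> nat \<Rightarrow> complex^3^3" where
  "matpow A 0 = mat 1"
| "matpow A (Suc n) = A ** matpow A n"

lemma matpow_add: "matpow A (m + n) = matpow A m ** matpow A n"
  by (induction m) (simp_all add: matrix_mul_assoc)

lemma matpow_mult_eq_1: "matpow A n = mat 1 \<Longrightarrow> matpow A (n * c) = mat 1"
  by (induction c) (simp_all add: matpow_add)

lemma matpow_in_group: "finite_matrix_group G \<Longrightarrow> A \<in> G \<Longrightarrow> matpow A n \<in> G"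
  by (induction n) (auto simp: finite_matrix_group_def)

lemma matpow_order_exists:
  assumes G: "finite_matrix_group G" and A: "A \<in> G"
  shows "\<exists>n>0. matpow A n = mat 1"
proof (rule finite_range_nat_period)
  show "finite (range (matpow A))"
    using G matpow_in_group[OF G A] by (metis finite_matrix_group_def finite_subset image_subsetI)
next
  fix a d assume eq: "matpow A (a + d) = matpow A a"
  obtain M where M: "M ** matpow A a = mat 1"
    using G matpow_in_group[OF G A] unfolding finite_matrix_group_def invertible_def by blast
  have "matpow A d = (M ** matpow A a) ** matpow A d" using M by simp
  also have "\<dots> = M ** matpow A (a + d)" by (simp add: matrix_mul_assoc matpow_add)
  also have "\<dots> = mat 1" using eq M by simp
  finally show "matpow A d = mat 1" .
qed

lemma finite_matrix_group_exponent:
  assumes G: "finite_matrix_group G"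
  obtains N where "N \<ge> 1" "\<And>A. A \<in> G \<Longrightarrow> matpow A N = mat 1"
proof -
  define ord where "ord A = (SOME n. n > 0 \<and> matpow A n = mat 1)" for A
  have ord: "ord A > 0 \<and> matpow A (ord A) = mat 1" if "A \<in> G" for A
    unfolding ord_def by (rule someI_ex) (rule matpow_order_exists[OF G that])
  have fin: "finite G" using G by (simp add: finite_matrix_group_def)
  show ?thesis
  proof
    have "(\<Prod>A\<in>G. ord A) > 0" using ord by (intro prod_pos) blast
    then show "(\<Prod>A\<in>G. ord A) \<ge> 1" by simp
  next
    fix A assume "A \<in> G"
    then have "ord A dvd (\<Prod>A\<in>G. ord A)" using fin by (intro dvd_prodI)
    then obtain c where "(\<Prod>A\<in>G. ord A) = ord A * c" by (elim dvdE)
    with ord[OF \<open>A \<in> G\<close>] show "matpow A (\<Prod>A\<in>G. ord A) = mat 1" by (simp add: matpow_mult_eq_1)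
  qed
qed

lemma matpow_eigenvector: "A *v v = z *s v \<Longrightarrow> matpow A n *v v = z ^ n *s v"
  by (induction n) (simp_all add: matrix_vector_mul_assoc[symmetric] vector_scalar_commute
      vector_smult_assoc mult.commute)

lemma eigenvalue_root_of_unity:
  assumes A: "matpow A N = mat 1" and z: "det (mat z - A) = 0"
  shows "z ^ N = 1"
proof -
  have "\<not> invertible (mat z - A)" using z invertible_det_nz by blast
  then obtain v where v: "(mat z - A) *v v = 0" "v \<noteq> 0"
    using matrix_left_invertible_ker[of "mat z - A"] invertible_left_inverse by blast
  have "mat z *v v = z *s v"
    by (simp add: vec_eq_iff matrix_vector_mult_def mat_def if_distrib[of "\<lambda>x. x * _"] cong: if_cong)
  then have "A *v v = z *s v" using v(1) by (simp add: matrix_vector_mult_diff_rdistrib)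
  then have "v = z ^ N *s v" using matpow_eigenvector[of A v z N] A by simp
  moreover obtain i where "v $ i \<noteq> 0" using v(2) by (metis vec_eq_iff zero_index)
  ultimately have "v $ i = z ^ N * v $ i" by (metis vector_smult_component)
  with \<open>v $ i \<noteq> 0\<close> show ?thesis by simp
qed

lemma charpoly_3x3:
  "\<exists>m. \<forall>z. det (mat z - A) = z ^ 3 - trace A * z ^ 2 + m * z - det (A :: complex^3^3)"
  unfolding det_3 trace_def sum_3
  by (intro exI[of _ "A$1$1*A$2$2 - A$1$2*A$2$1 + A$1$1*A$3$3 - A$1$3*A$3$1 + A$2$2*A$3$3 - A$2$3*A$3$2"])
    (simp add: mat_def power2_eq_square power3_eq_cube algebra_simps)

text \<open>The trace is the sum of the three roots of the characteristic polynomial.\<close>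

lemma trace_in_cyclotomic_ints:
  assumes N: "N \<ge> 1" and A: "matpow A N = mat 1"
  shows "trace A \<in> cyclotomic_ints N"
proof -
  obtain m where m: "\<And>z. det (mat z - A) = z ^ 3 - trace A * z ^ 2 + m * z - det A"
    using charpoly_3x3 by blast
  define P where "P = [:-det A, m, -trace A, 1:]"
  have poly_P: "poly P z = det (mat z - A)" for z
    by (simp add: P_def m power2_eq_square power3_eq_cube algebra_simps)
  have "degree P = 3" "lead_coeff P = 1" by (simp_all add: P_def eval_nat_numeral)
  moreover obtain r where "smult (lead_coeff P) (\<Prod>i<degree P. [:-r i, 1:]) = P"
    using complex_poly_decompose' by blast
  ultimately have P: "P = [:-r 0, 1:] * [:-r 1, 1:] * [:-r 2, 1:]"
    by (simp add: eval_nat_numeral prod.lessThan_Suc)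
  have trace: "trace A = r 0 + r 1 + r 2"
    using arg_cong[OF P, of "\<lambda>q. coeff q 2"] by (simp add: P_def numeral_2_eq_2 algebra_simps)
  have root: "r i \<in> cyclotomic_ints N" if "poly P (r i) = 0" for i
  proof -
    have "r i ^ N = 1" using eigenvalue_root_of_unity[OF A] that poly_P by simp
    then show ?thesis using root_of_unity_eq_zeta_power[OF N] zeta_power_in_cyclotomic_ints by metis
  qed
  have "poly P (r 0) = 0" "poly P (r 1) = 0" "poly P (r 2) = 0"
    unfolding P poly_mult by simp_all
  then show ?thesis unfolding trace by (intro cyclotomic_ints_add root)
qed

section \<open>Entries of \<open>T\<close> through traces\<close>

lemma Smat_mult_nth: "(Smat k ** M) $ i $ j = (if i = k then M $ i $ j else - M $ i $ j)"
  by (simp add: matrix_matrix_mult_def Smat_def if_distrib[of "\<lambda>x. x * _"] cong: if_cong)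

lemma mult_Smat_nth: "(M ** Smat l) $ i $ j = (if j = l then M $ i $ j else - M $ i $ j)"
  by (simp add: matrix_matrix_mult_def Smat_def if_distrib[of "\<lambda>x. _ * x"] cong: if_cong)

lemma trace_matrix_mult: "trace (A ** B) = (\<Sum>i\<in>UNIV. \<Sum>j\<in>UNIV. A$i$j * B$j$i)"
  by (simp add: trace_def matrix_matrix_mult_def)

lemma diag_entry_via_traces: "2 * T$k$k = trace T + trace (Smat k ** T)"
  using exhaust_3[of k] by (auto simp: trace_def Smat_mult_nth sum_3)

lemma offdiag_product_via_traces:
  "4 * (T$k$l * T$l$k) = trace (T ** T) + trace (Smat k ** T ** T) + trace (T ** Smat l ** T)
                         + trace (Smat k ** T ** Smat l ** T)"
  unfolding trace_matrix_mult using exhaust_3[of k] exhaust_3[of l]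
  by (auto simp: Smat_mult_nth mult_Smat_nth sum_3 algebra_simps)

text \<open>For each admissible \<open>c\<close>, \<open>1/(2c)\<close> is \<open>1\<close>, \<open>4c\<^sup>2 - 2\<close> or \<open>2 - 4c\<^sup>2\<close> respectively.\<close>

lemma inverse_double_as_int_poly:
  assumes "c \<in> {1/2, (sqrt 5 + 1) / 4, (sqrt 5 - 1) / 4}"
  shows "\<exists>(a::int) (b::int). 2 * c * (a + b * (4 * c ^ 2)) = 1"
  using assms
proof (elim insertE emptyE)
  assume c: "c = (sqrt 5 + 1) / 4"
  show ?thesis unfolding c by (intro exI[of _ "-2"] exI[of _ 1]) (simp add: power2_eq_square field_simps)
next
  assume c: "c = (sqrt 5 - 1) / 4"
  show ?thesis unfolding c by (intro exI[of _ 2] exI[of _ "-1"]) (simp add: power2_eq_square field_simps)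
qed (intro exI[of _ 1] exI[of _ 0], simp)

text \<open>Here \<open>t\<close> is a diagonal entry of \<open>T\<close>: \<open>t/c = 2t \<cdot> (a + b|2t|\<^sup>2)\<close> lies in \<open>\<int>[\<zeta>]\<close> and has modulus 1.\<close>

lemma scaled_root_of_unity_if_double_cyclotomic:
  assumes N: "N \<ge> 1" and t: "2 * t \<in> cyclotomic_ints N" "cmod t = c"
    and c: "c \<in> {1/2, (sqrt 5 + 1) / 4, (sqrt 5 - 1) / 4}"
  shows "\<exists>\<xi>. root_of_unity \<xi> \<and> t = complex_of_real c * \<xi>"
proof -
  obtain a b :: int where ab: "2 * c * (a + b * (4 * c ^ 2)) = 1"
    using inverse_double_as_int_poly[OF c] by blast
  define r where "r = a + b * (4 * c ^ 2)"
  have r_eq: "complex_of_real r = of_int a + of_int b * (2 * t * cnj (2 * t))"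
    using t(2) complex_norm_square[of "2 * t"] by (simp add: r_def norm_mult power_mult_distrib)
  have "complex_of_real r \<in> cyclotomic_ints N" unfolding r_eq
    by (intro cyclotomic_ints_add cyclotomic_ints_mult of_int_in_cyclotomic_ints
        cnj_in_cyclotomic_ints N t(1))
  then have "root_of_unity (2 * t * complex_of_real r)"
  proof (rule cyclotomic_int_norm_1_imp_root_of_unity[OF N cyclotomic_ints_mult[OF t(1)]])
    have "norm (2 * t * complex_of_real r) = \<bar>2 * c * r\<bar>" using t(2) by (auto simp: norm_mult abs_mult)
    then show "norm (2 * t * complex_of_real r) = 1" using ab by (simp add: r_def)
  qed
  moreover have "complex_of_real c * (2 * t * complex_of_real r) = complex_of_real (2 * c * r) * t"
    by (simp add: algebra_simps)
  then have "t = complex_of_real c * (2 * t * complex_of_real r)" using ab by (simp add: r_def)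
  ultimately show ?thesis by blast
qed

theorem theorem3:
  fixes G :: "(complex^3^3) set" and T :: "complex^3^3" and c :: real
  assumes "finite_matrix_group G"
    and "\<forall>A\<in>G. unitary3 A"
    and "Smat 1 \<in> G" and "Smat 2 \<in> G" and "Smat 3 \<in> G"
    and "T \<in> G"
    and "c \<in> {1/2, (sqrt 5 + 1) / 4, (sqrt 5 - 1) / 4}"
  shows "(\<forall>j::3. cmod (T $ j $ j) = c \<longrightarrow>
            (\<exists>\<xi>. root_of_unity \<xi> \<and> T $ j $ j = complex_of_real c * \<xi>))
       \<and> (\<forall>k l::3. k \<noteq> l \<longrightarrow> cmod (T $ k $ l * T $ l $ k) = 1/4 \<longrightarrow>
            (\<exists>\<xi>. root_of_unity \<xi> \<and> T $ k $ l * T $ l $ k = \<xi> / 4))"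
proof -
  obtain N where N: "N \<ge> 1" and exp: "\<And>A. A \<in> G \<Longrightarrow> matpow A N = mat 1"
    using finite_matrix_group_exponent[OF assms(1)] by blast
  have SG: "Smat k \<in> G" for k using exhaust_3[of k] assms(3-5) by auto
  have mult_G: "A ** B \<in> G" if "A \<in> G" "B \<in> G" for A B
    using that assms(1) by (simp add: finite_matrix_group_def)
  have trace_G: "trace A \<in> cyclotomic_ints N" if "A \<in> G" for A
    by (rule trace_in_cyclotomic_ints[OF N exp[OF that]])
  have diag: "2 * T $ j $ j \<in> cyclotomic_ints N" for j
    unfolding diag_entry_via_traces by (intro cyclotomic_ints_add trace_G mult_G SG assms(6))
  have offdiag: "4 * (T $ k $ l * T $ l $ k) \<in> cyclotomic_ints N" for k l
    unfolding offdiag_product_via_traces by (intro cyclotomic_ints_add trace_G mult_G SG assms(6))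
  show ?thesis
  proof (intro conjI allI impI)
    fix j assume "cmod (T $ j $ j) = c"
    then show "\<exists>\<xi>. root_of_unity \<xi> \<and> T $ j $ j = complex_of_real c * \<xi>"
      using scaled_root_of_unity_if_double_cyclotomic[OF N diag _ assms(7)] by blast
  next
    fix k l :: 3 assume "cmod (T $ k $ l * T $ l $ k) = 1/4"
    then have "root_of_unity (4 * (T $ k $ l * T $ l $ k))"
      by (intro cyclotomic_int_norm_1_imp_root_of_unity[OF N offdiag]) (simp add: norm_mult)
    then show "\<exists>\<xi>. root_of_unity \<xi> \<and> T $ k $ l * T $ l $ k = \<xi> / 4"
      by (intro exI[of _ "4 * (T $ k $ l * T $ l $ k)"]) simp
  qed
qed

end
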